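(* Let $\mathcal{L}\subseteq\{w\in\{t,t^{-1}\}^*:\sharp_t(w)-\sharp_{t^{-1}}(w)\ge0\}$ be a regular language. Then there is a constant $K\ge0$ such that for all $w\in\mathcal{L}$ and all $i,j\in\{0,1,\dots,\ell(w)\}$ with $j>i$, one has $f_w(j)>f_w(i)-K$.
   Context: For a word $w$ and a letter $x$, $\sharp_x(w)$ is the number of occurrences of $x$ in $w$, and $\ell(w)$ is the length of $w$. For $w=x_1\cdots x_n\in\{t,t^{-1}\}^*$ with $x_i\in\{t,t^{-1}\}$, define $f_w\colon\{0,1,\dots,n\}\to\mathbb{Z}$ by $f_w(i)=\sharp_t(x_1\cdots x_i)-\sharp_{t^{-1}}(x_1\cdots x_i)$. A regular language is one accepted by a finite state automaton. *)

theory Defs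
  imports Main
begin

datatype letter = T | Tinv

definition occ :: "letter \<Rightarrow> letter list \<Rightarrow> nat" where
  "occ x w = length (filter (\<lambda>y. y = x) w)"

definition fw :: "letter list \<Rightarrow> nat \<Rightarrow> int" where
  "fw w i = int (occ T (take i w)) - int (occ Tinv (take i w))"

definition dfa_ok :: "nat set \<Rightarrow> nat \<Rightarrow> (nat \<Rightarrow> letter \<Rightarrow> nat) \<Rightarrow> nat set \<Rightarrow> bool" where
  "dfa_ok Q q0 \<delta> F \<longleftrightarrow> finite Q \<and> q0 \<in> Q \<and> F \<subseteq> Q \<and> (\<forall>q\<in>Q. \<forall>a. \<delta> q a \<in> Q)"

definition dfa_lang :: "nat \<Rightarrow> (nat \<Rightarrow> letter \<Rightarrow> nat) \<Rightarrow> nat set \<Rightarrow> letter list set" where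
  "dfa_lang q0 \<delta> F = {w. foldl \<delta> q0 w \<in> F}"

definition regular :: "letter list set \<Rightarrow> bool" where
  "regular L \<longleftrightarrow> (\<exists>Q q0 \<delta> F. dfa_ok Q q0 \<delta> F \<and> L = dfa_lang q0 \<delta> F)"

end

theory Submission
  imports Defs
begin

text \<open>
  Follow the run of an automaton for L along a word w of L. If the run is in the same state
  at positions p < q, the factor between them can be pumped, so its height (number of t minus
  number of t^-1) is nonnegative, since otherwise pumping yields words of L of negative height;
  hence f_w(p) \<le> f_w(q). Now let f_w fall from f_w(i) to f_w(j). For every level v in between,
  take the last position of [i, j] at which f_w \<ge> v; as f_w moves by steps of \<plusminus>1, f_w equals v
  there. These positions carry pairwise distinct states, so the drop is less than the number
  of states.
\<close>

definition net :: "letter list \<Rightarrow> int" where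
  "net w = int (occ T w) - int (occ Tinv w)"

lemma net_append [simp]: "net (u @ v) = net u + net v"
  by (simp add: net_def occ_def)

lemma net_concat_replicate: "net (concat (replicate m u)) = int m * net u"
  by (induction m) (auto simp: algebra_simps net_def occ_def)

lemma fw_eq_net_take: "fw w i = net (take i w)"
  by (simp add: fw_def net_def)

lemma net_take_Suc_ge: "net (take (Suc k) w) \<ge> net (take k w) - 1"
proof (cases "k < length w")
  case True
  then have "take (Suc k) w = take k w @ [w ! k]"
    by (simp add: take_Suc_conv_app_nth)
  then show ?thesis
    by (cases "w ! k") (auto simp: net_def occ_def)
qed simp

lemma foldl_in_states: "dfa_ok Q q0 \<delta> F \<Longrightarrow> r \<in> Q \<Longrightarrow> foldl \<delta> r xs \<in> Q"
  by (induction xs arbitrary: r) (auto simp: dfa_ok_def)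

lemma foldl_concat_replicate_loop:
  "foldl \<delta> r u = r \<Longrightarrow> foldl \<delta> r (concat (replicate m u)) = r"
  by (induction m) auto

lemma net_loop_nonneg:
  assumes L: "L = dfa_lang q0 \<delta> F"
    and nonneg: "\<And>w. w \<in> L \<Longrightarrow> net w \<ge> 0"
    and xuy: "x @ u @ y \<in> L"
    and loop: "foldl \<delta> (foldl \<delta> q0 x) u = foldl \<delta> q0 x"
  shows "net u \<ge> 0"
proof (rule ccontr)
  assume "\<not> net u \<ge> 0"
  then have neg: "net u \<le> -1" by simp
  define m where "m = nat (net x + net y) + 1"
  have "x @ concat (replicate m u) @ y \<in> L"
    using xuy loop foldl_concat_replicate_loop[OF loop] by (simp add: L dfa_lang_def)
  then have "0 \<le> net x + net y + int m * net u"
    using nonneg by (fastforce simp: net_concat_replicate)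
  also have "\<dots> \<le> net x + net y - int m"
    using mult_left_mono[OF neg, of "int m"] by simp
  also have "\<dots> < 0"
    unfolding m_def by simp
  finally show False by simp
qed

lemma net_take_mono_on_equal_states:
  assumes L: "L = dfa_lang q0 \<delta> F"
    and nonneg: "\<And>w. w \<in> L \<Longrightarrow> net w \<ge> 0"
    and w: "w \<in> L" and pq: "p < q" "q \<le> length w"
    and same_state: "foldl \<delta> q0 (take p w) = foldl \<delta> q0 (take q w)"
  shows "net (take p w) \<le> net (take q w)"
proof -
  define u where "u = take (q - p) (drop p w)"
  have take_q: "take q w = take p w @ u"
    using pq by (simp add: u_def take_add[symmetric])
  have "take p w @ u @ drop q w \<in> L"
    using w take_q by (metis append.assoc append_take_drop_id)
  moreover have "foldl \<delta> (foldl \<delta> q0 (take p w)) u = foldl \<delta> q0 (take p w)"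
    using same_state take_q by simp
  ultimately have "net u \<ge> 0"
    using net_loop_nonneg[OF L nonneg] by blast
  then show ?thesis
    using take_q by simp
qed

lemma drop_less_card_image:
  fixes g :: "nat \<Rightarrow> int" and s :: "nat \<Rightarrow> 'a"
  assumes step: "\<And>k. i \<le> k \<Longrightarrow> k < j \<Longrightarrow> g (Suc k) \<ge> g k - 1"
    and mono: "\<And>p q. i \<le> p \<Longrightarrow> p < q \<Longrightarrow> q \<le> j \<Longrightarrow> s p = s q \<Longrightarrow> g p \<le> g q"
    and "i \<le> j"
  shows "g i - g j < int (card (s ` {i..j}))"
proof -
  define last_at where "last_at v = Max {p \<in> {i..j}. v \<le> g p}" for v
  have last_at: "last_at v \<in> {i..j}" "v \<le> g (last_at v)"
    "\<And>q. q \<in> {i..j} \<Longrightarrow> v \<le> g q \<Longrightarrow> q \<le> last_at v"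
    if "v \<le> g i" for v
  proof -
    have "i \<in> {p \<in> {i..j}. v \<le> g p}"
      using that \<open>i \<le> j\<close> by simp
    then have "last_at v \<in> {p \<in> {i..j}. v \<le> g p}"
      unfolding last_at_def by (intro Max_in) auto
    then show "last_at v \<in> {i..j}" "v \<le> g (last_at v)"
      by auto
    show "q \<le> last_at v" if "q \<in> {i..j}" "v \<le> g q" for q
      using that unfolding last_at_def by (intro Max_ge) auto
  qed
  have g_last_at: "g (last_at v) = v" if "v \<in> {g j..g i}" for v
  proof (cases "last_at v = j")
    case False
    with last_at(1)[of v] that have "last_at v < j"
      by auto
    moreover from this last_at(1)[of v] last_at(3)[of v "Suc (last_at v)"] that
    have "g (Suc (last_at v)) < v"
      by fastforce
    ultimately show ?thesis
      using step[of "last_at v"] last_at(1,2)[of v] that by fastforce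
  qed (use that last_at(2)[of v] in auto)
  have "s (last_at v) \<noteq> s (last_at u)"
    if "v \<in> {g j..g i}" "u \<in> {g j..g i}" "v < u" for u v
  proof
    assume same: "s (last_at v) = s (last_at u)"
    have "last_at u \<le> last_at v"
      using last_at(1)[of u] last_at(3)[of v "last_at u"] g_last_at[of u] that by auto
    moreover have "last_at u \<noteq> last_at v"
      using g_last_at[of u] g_last_at[of v] that by auto
    ultimately have "g (last_at u) \<le> g (last_at v)"
      using mono[of "last_at u" "last_at v"] last_at(1)[of u] last_at(1)[of v] same that
      by auto
    then show False
      using g_last_at that by simp
  qed
  then have "inj_on (\<lambda>v. s (last_at v)) {g j..g i}"
    unfolding inj_on_def by (metis linorder_neqE)
  moreover have "(\<lambda>v. s (last_at v)) ` {g j..g i} \<subseteq> s ` {i..j}"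
    using last_at(1) by auto
  ultimately have "card {g j..g i} \<le> card (s ` {i..j})"
    by (intro card_inj_on_le) auto
  then show ?thesis
    by simp
qed

theorem lemma4p4:
  fixes L :: "letter list set"
  assumes "regular L"
    and "L \<subseteq> {w. int (occ T w) - int (occ Tinv w) \<ge> 0}"
  shows "\<exists>K::int. K \<ge> 0 \<and> (\<forall>w\<in>L. \<forall>i j. i \<le> length w \<and> j \<le> length w \<and> j > i
            \<longrightarrow> fw w j > fw w i - K)"
proof -
  obtain Q q0 \<delta> F where ok: "dfa_ok Q q0 \<delta> F" and L: "L = dfa_lang q0 \<delta> F"
    using assms(1) unfolding regular_def by blast
  have nonneg: "\<And>w. w \<in> L \<Longrightarrow> net w \<ge> 0"
    using assms(2) unfolding net_def by auto
  have "fw w j > fw w i - int (card Q)"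
    if w: "w \<in> L" and ij: "i \<le> length w \<and> j \<le> length w \<and> j > i" for w i j
  proof -
    define state where "state k = foldl \<delta> q0 (take k w)" for k
    have "net (take i w) - net (take j w) < int (card (state ` {i..j}))"
      using ij net_take_Suc_ge net_take_mono_on_equal_states[OF L nonneg w]
      by (intro drop_less_card_image) (auto simp: state_def)
    moreover have "card (state ` {i..j}) \<le> card Q"
      using ok foldl_in_states[OF ok] unfolding state_def dfa_ok_def by (intro card_mono) auto
    ultimately show ?thesis
      by (simp add: fw_eq_net_take)
  qed
  then show ?thesis
    by (intro exI[of _ "int (card Q)"]) auto
qed

end
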